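(* Let $k\ge2$, $r\ge0$ and $n=2\cdot 3^k-2+4r$. Let $M$ be the closed surface carrying the polyhedral map $D_{\{2k+1,2k+1\}}(n)$. Then $M$ is orientable if $r$ is even and non-orientable if $r$ is odd.
   Context: Vertex set $\mathbb{Z}_n$; integers are read modulo $n$. Define $w_0=0$, $w_1=3^k-1+2r$. Then successively subtract $3^{k-1}+r$ twice, then $3^{k-2}$ twice, $3^{k-3}$ twice, ..., and finally $3$ twice. This gives vertices $w_2,\dots,w_{2k-1}$, and one checks $w_{2k-1}=2$. Let $P$ be the $(2k+1)$-gon with cyclically ordered boundary vertices $(0,w_1,w_2,\dots,w_{2k-2},2,1)$. The map $D_{\{2k+1,2k+1\}}(n)$ is the 2-dimensional cell complex whose 2-cells are the $n$ translates $P+i$, $i\in\mathbb{Z}_n$. It is a known standing fact (Datta) that this is a $\{2k+1,2k+1\}$-equivelar polyhedral map on a closed surface $M$: every 2-cell is a $(2k+1)$-gon, every vertex has degree $2k+1$, and any two 2-cells meet in the empty set, a common vertex, or a common edge. *)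

theory Defs
  imports Main
begin

(* Combinatorial orientability of a 2-dimensional cell complex given by a list of
   faces, each face a list of vertices in cyclic boundary order. *)

definition face_darts :: "'a list \<Rightarrow> ('a \<times> 'a) set" where
  "face_darts F = {(F ! j, F ! ((j + 1) mod length F)) | j. j < length F}"

definition oriented_darts :: "bool \<Rightarrow> 'a list \<Rightarrow> ('a \<times> 'a) set" where
  "oriented_darts s F = (if s then face_darts F else (\<lambda>(a, b). (b, a)) ` face_darts F)"

(* orientable: the faces can be oriented so that every edge is traversed in opposite
   directions by the (two) faces containing it, i.e. no directed edge occurs in two
   distinct oriented faces *)
definition orientable_map :: "'a list list \<Rightarrow> bool" where
  "orientable_map Fs \<longleftrightarrow> (\<exists>\<sigma> :: nat \<Rightarrow> bool.
     \<forall>i j. i < length Fs \<longrightarrow> j < length Fs \<longrightarrow> i \<noteq> j \<longrightarrow>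
       oriented_darts (\<sigma> i) (Fs ! i) \<inter> oriented_darts (\<sigma> j) (Fs ! j) = {})"

(* the step subtracted to go from w_(t-1) to w_t, t = 2 .. 2k-1:
   3^(k-1)+r twice, then 3^(k-2) twice, ..., 3 twice *)
definition D_step :: "nat \<Rightarrow> nat \<Rightarrow> nat \<Rightarrow> int" where
  "D_step k r t = 3 ^ (k - t div 2) + (if t \<le> 3 then int r else 0)"

definition D_w :: "nat \<Rightarrow> nat \<Rightarrow> nat \<Rightarrow> int" where
  "D_w k r j = (if j = 0 then 0
                else 3 ^ k - 1 + 2 * int r - (\<Sum>t = 2..j. D_step k r t))"

definition D_polygon :: "nat \<Rightarrow> nat \<Rightarrow> int list" where
  "D_polygon k r = map (D_w k r) [0..<2 * k - 1] @ [2, 1]"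

(* the faces P + i, i in Z_n, vertices read modulo n (represented in {0..n-1}) *)
definition D_map :: "nat \<Rightarrow> nat \<Rightarrow> nat \<Rightarrow> int list list" where
  "D_map k r n = map (\<lambda>i. map (\<lambda>v. (v + int i) mod int n) (D_polygon k r)) [0..<n]"

end

theory Submission
  imports Defs
begin

(* The map D_{2k+1,2k+1}(n) consists of the n translates P + i (i in Z_n) of a single
   polygon P = (V_0, ..., V_2k).  Its first edge V_0 V_1 has length H = n/2, all other
   edges go "downwards" by a step d_a with 0 < -d_a < H.

   Orientable case (r even): orient face i positively iff i is even.  Two faces traversing
   a common directed edge in the same direction would need equal edge steps (which forces
   the two faces to coincide, or a parity clash since equal steps only occur on adjacent
   edges and the steps are odd); two faces traversing an edge in opposite directions would
   need d_a + d_b = 0 mod n, which forces both edges to be the long edge, and then H even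
   gives a parity clash.
   Non-orientable case (r odd): faces i and i+1 share the directed edge (i+2, i+1), so
   orientations must alternate along 0, 1, ..., n-1; but faces 0 and s = 3^(k-1) + r, an
   even number, share the directed edge (w_1, w_2) -- an odd cycle of forced flips. *)

definition shares_dart :: "'a list list \<Rightarrow> nat \<Rightarrow> nat \<Rightarrow> bool" where
  "shares_dart Fs i j \<longleftrightarrow> face_darts (Fs ! i) \<inter> face_darts (Fs ! j) \<noteq> {}"

lemma orientation_flips_on_shared_dart:
  assumes orient: "\<forall>i j. i < length Fs \<longrightarrow> j < length Fs \<longrightarrow> i \<noteq> j \<longrightarrow>
       oriented_darts (\<sigma> i) (Fs ! i) \<inter> oriented_darts (\<sigma> j) (Fs ! j) = {}"
    and ij: "i < length Fs" "j < length Fs" "i \<noteq> j"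
    and shared: "shares_dart Fs i j"
  shows "\<sigma> i \<noteq> \<sigma> j"
proof
  assume same: "\<sigma> i = \<sigma> j"
  obtain x where "x \<in> face_darts (Fs ! i)" "x \<in> face_darts (Fs ! j)"
    using shared unfolding shares_dart_def by blast
  then have "oriented_darts (\<sigma> i) (Fs ! i) \<inter> oriented_darts (\<sigma> j) (Fs ! j) \<noteq> {}"
    using same unfolding oriented_darts_def by (cases "\<sigma> j") auto
  then show False using orient ij by blast
qed

(* If consecutive faces always share a directed edge, orientations alternate; a further
   shared directed edge between faces at even distance then closes an odd cycle. *)
lemma not_orientable_by_odd_cycle:
  assumes chain: "\<And>i. i + 1 < length Fs \<Longrightarrow> shares_dart Fs i (i + 1)"
    and closing: "shares_dart Fs 0 s" "0 < s" "s < length Fs" "even s"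
  shows "\<not> orientable_map Fs"
proof
  assume "orientable_map Fs"
  then obtain \<sigma> :: "nat \<Rightarrow> bool" where orient: "\<forall>i j. i < length Fs \<longrightarrow> j < length Fs \<longrightarrow>
      i \<noteq> j \<longrightarrow> oriented_darts (\<sigma> i) (Fs ! i) \<inter> oriented_darts (\<sigma> j) (Fs ! j) = {}"
    unfolding orientable_map_def by blast
  have alternate: "\<sigma> i = (\<sigma> 0 = even i)" if "i < length Fs" for i
    using that
  proof (induction i)
    case 0
    show ?case by simp
  next
    case (Suc i)
    have "\<sigma> i \<noteq> \<sigma> (Suc i)"
      using orientation_flips_on_shared_dart[OF orient] chain[of i] Suc.prems by simp
    then show ?case using Suc by auto
  qed
  have "\<sigma> 0 \<noteq> \<sigma> s"
    by (rule orientation_flips_on_shared_dart[OF orient]) (use closing in auto)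
  then show False using alternate[OF closing(3)] closing(4) by simp
qed

definition translate_faces :: "int list \<Rightarrow> nat \<Rightarrow> int list list" where
  "translate_faces P n = map (\<lambda>i. map (\<lambda>v. (v + int i) mod int n) P) [0..<n]"

definition edge_diff :: "int list \<Rightarrow> nat \<Rightarrow> int" where
  "edge_diff P a = P ! ((a + 1) mod length P) - P ! a"

definition translate_dart :: "int list \<Rightarrow> nat \<Rightarrow> nat \<Rightarrow> nat \<Rightarrow> int \<times> int" where
  "translate_dart P n i a =
     ((P ! a + int i) mod int n, (P ! a + edge_diff P a + int i) mod int n)"

lemma D_map_translate_faces: "D_map k r n = translate_faces (D_polygon k r) n"
  by (simp add: D_map_def translate_faces_def)

lemma translate_faces_length: "length (translate_faces P n) = n"
  by (simp add: translate_faces_def)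

lemma translate_face_darts:
  assumes "P \<noteq> []" "i < n"
  shows "face_darts (translate_faces P n ! i) = translate_dart P n i ` {..<length P}"
proof -
  let ?F = "translate_faces P n ! i"
  have F: "?F = map (\<lambda>v. (v + int i) mod int n) P"
    using assms(2) by (simp add: translate_faces_def)
  have "length ?F = length P" by (simp add: F)
  then have "face_darts ?F = (\<lambda>a. (?F ! a, ?F ! ((a + 1) mod length P))) ` {..<length P}"
    unfolding face_darts_def setcompr_eq_image by (simp add: lessThan_def)
  also have "\<dots> = translate_dart P n i ` {..<length P}"
  proof (rule image_cong)
    fix a assume "a \<in> {..<length P}"
    moreover have "(a + 1) mod length P < length P" using assms(1) by simp
    ultimately show "(?F ! a, ?F ! ((a + 1) mod length P)) = translate_dart P n i a"
      unfolding F translate_dart_def edge_diff_def by simp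
  qed simp
  finally show ?thesis .
qed

lemma translate_faces_share_dart:
  assumes "P \<noteq> []" "i < n" "j < n" "a < length P" "b < length P"
    and tail: "P ! a + int i = P ! b + int j" and step: "edge_diff P a = edge_diff P b"
  shows "shares_dart (translate_faces P n) i j"
proof -
  have head: "P ! a + edge_diff P a + int i = P ! b + edge_diff P b + int j"
    using tail step by linarith
  have "translate_dart P n i a = translate_dart P n j b"
    by (simp only: translate_dart_def tail head)
  moreover have "translate_dart P n i a \<in> face_darts (translate_faces P n ! i)"
    unfolding translate_face_darts[OF assms(1,2)] using assms(4) by simp
  moreover have "translate_dart P n j b \<in> face_darts (translate_faces P n ! j)"
    unfolding translate_face_darts[OF assms(1,3)] using assms(5) by simp
  ultimately show ?thesis unfolding shares_dart_def by (metis IntI empty_iff)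
qed

lemma dvd_small_eq_0:
  fixes N x :: int
  assumes "N dvd x" "\<bar>x\<bar> < N"
  shows "x = 0"
  using assms dvd_imp_le_int by force

definition odd_equal_steps :: "int list \<Rightarrow> bool" where
  "odd_equal_steps P \<longleftrightarrow> (\<forall>a b. 0 < a \<longrightarrow> 0 < b \<longrightarrow> a < length P \<longrightarrow> b < length P \<longrightarrow>
     a \<noteq> b \<longrightarrow> edge_diff P a = edge_diff P b \<longrightarrow> odd (P ! a - P ! b))"

(* A polygon whose first edge has length H and whose other edges step down by less
   than H: modulo 2H the edge steps then determine the edge up to the long one. *)
locale long_first_edge =
  fixes P :: "int list" and H :: int
  assumes nonempty: "P \<noteq> []"
    and H_pos: "0 < H"
    and first_edge: "edge_diff P 0 = H"
    and short_edges: "\<And>a. 0 < a \<Longrightarrow> a < length P \<Longrightarrow> - H < edge_diff P a \<and> edge_diff P a < 0"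
begin

lemma edge_diff_cases:
  "a < length P \<Longrightarrow> (a = 0 \<and> edge_diff P a = H) \<or> (0 < a \<and> - H < edge_diff P a \<and> edge_diff P a < 0)"
  using first_edge short_edges by (cases "a = 0") auto

lemma edge_diff_eq_H: "a < length P \<Longrightarrow> edge_diff P a = H \<longleftrightarrow> a = 0"
  using edge_diff_cases H_pos by force

lemma edge_diff_cong_same:
  assumes "a < length P" "b < length P" "(2 * H) dvd (edge_diff P a - edge_diff P b)"
  shows "edge_diff P a = edge_diff P b"
proof -
  have "\<bar>edge_diff P a - edge_diff P b\<bar> < 2 * H"
    using edge_diff_cases[OF assms(1)] edge_diff_cases[OF assms(2)] H_pos by auto
  then show ?thesis using dvd_small_eq_0[OF assms(3)] by simp
qed

lemma edge_diff_cong_opposite: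
  assumes "a < length P" "b < length P" "(2 * H) dvd (edge_diff P a + edge_diff P b)"
  shows "a = 0 \<and> b = 0"
proof (rule ccontr)
  assume "\<not> (a = 0 \<and> b = 0)"
  then have "0 < \<bar>edge_diff P a + edge_diff P b\<bar> \<and> \<bar>edge_diff P a + edge_diff P b\<bar> < 2 * H"
    using edge_diff_cases[OF assms(1)] edge_diff_cases[OF assms(2)] by auto
  then show False using dvd_small_eq_0[OF assms(3)] by simp
qed

lemma same_direction_darts:
  assumes n: "int n = 2 * H"
    and parity: "odd_equal_steps P"
    and ij: "i < n" "j < n" "even (int i - int j)"
    and ab: "a < length P" "b < length P"
    and eq: "translate_dart P n i a = translate_dart P n j b"
  shows "i = j"
proof -
  have tail: "(2 * H) dvd (P ! a + int i - (P ! b + int j))"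
    using eq n unfolding translate_dart_def by (simp add: mod_eq_dvd_iff)
  have head: "(2 * H) dvd (P ! a + edge_diff P a + int i - (P ! b + edge_diff P b + int j))"
    using eq n unfolding translate_dart_def by (simp add: mod_eq_dvd_iff)
  have "(2 * H) dvd (edge_diff P a - edge_diff P b)"
    using dvd_diff[OF head tail] by (simp add: algebra_simps)
  then have same_step: "edge_diff P a = edge_diff P b"
    using edge_diff_cong_same ab by blast
  show ?thesis
  proof (cases "a = b")
    case True
    then have "(2 * H) dvd (int i - int j)" using tail by simp
    then show ?thesis using dvd_small_eq_0[of "2 * H" "int i - int j"] ij n by auto
  next
    case False
    then have "a \<noteq> 0 \<and> b \<noteq> 0"
      using same_step edge_diff_eq_H[OF ab(1)] edge_diff_eq_H[OF ab(2)] by auto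
    then have "odd (P ! a - P ! b)"
      using parity ab False same_step unfolding odd_equal_steps_def by auto
    moreover have "even (P ! a - P ! b + (int i - int j))"
      using dvd_trans[OF _ tail, of 2] by (simp add: algebra_simps)
    ultimately show ?thesis using ij(3) by simp
  qed
qed

lemma opposite_direction_darts:
  assumes n: "int n = 2 * H" and H_even: "even H"
    and ij: "odd (int i - int j)"
    and ab: "a < length P" "b < length P"
    and eq: "translate_dart P n i a = prod.swap (translate_dart P n j b)"
  shows False
proof -
  have tail: "(2 * H) dvd (P ! a + int i - (P ! b + edge_diff P b + int j))"
    using eq n unfolding translate_dart_def by (simp add: mod_eq_dvd_iff)
  have head: "(2 * H) dvd (P ! a + edge_diff P a + int i - (P ! b + int j))"
    using eq n unfolding translate_dart_def by (simp add: mod_eq_dvd_iff)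
  have "(2 * H) dvd (edge_diff P a + edge_diff P b)"
    using dvd_diff[OF head tail] by (simp add: algebra_simps)
  then have "a = 0" "b = 0" using edge_diff_cong_opposite ab by blast+
  then have "(2 * H) dvd (int i - int j - H)"
    using tail first_edge by (simp add: algebra_simps)
  then have "even (int i - int j - H)" by (rule dvd_trans[rotated]) simp
  then show False using ij H_even by presburger
qed

theorem translate_faces_orientable:
  assumes n: "int n = 2 * H" and H_even: "even H"
    and parity: "odd_equal_steps P"
  shows "orientable_map (translate_faces P n)"
  unfolding orientable_map_def translate_faces_length
proof (intro exI[of _ "\<lambda>i. even i"] allI impI)
  fix i j assume ij: "i < n" "j < n" "i \<noteq> j"
  have swap: "(\<lambda>(a, b). (b, a)) = prod.swap" by (simp add: fun_eq_iff)
  have darts: "oriented_darts s (translate_faces P n ! i) =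
      (\<lambda>a. (if s then id else prod.swap) (translate_dart P n i a)) ` {..<length P}"
    if "i < n" for s i
    using translate_face_darts[OF nonempty that]
    unfolding oriented_darts_def swap by (simp add: image_image)
  show "oriented_darts (even i) (translate_faces P n ! i) \<inter>
        oriented_darts (even j) (translate_faces P n ! j) = {}"
  proof (rule ccontr)
    assume "\<not> ?thesis"
    then obtain x where x: "x \<in> oriented_darts (even i) (translate_faces P n ! i)"
        "x \<in> oriented_darts (even j) (translate_faces P n ! j)"
      by (meson disjoint_iff)
    obtain a where a: "a < length P" "x = (if even i then id else prod.swap) (translate_dart P n i a)"
      using x(1) unfolding darts[OF ij(1)] by auto
    obtain b where b: "b < length P" "x = (if even j then id else prod.swap) (translate_dart P n j b)"
      using x(2) unfolding darts[OF ij(2)] by auto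
    note ab = a(1) b(1)
    have eq: "(if even i then id else prod.swap) (translate_dart P n i a) =
        (if even j then id else prod.swap) (translate_dart P n j b)"
      using a(2) b(2) by simp
    consider "even i = even j" | "even i" "odd j" | "odd i" "even j" by blast
    then show False
    proof cases
      case 1
      have "even (int i - int j)" using 1 by simp
      moreover have "translate_dart P n i a = translate_dart P n j b"
        using eq 1 by (cases "even i") (simp, metis id_apply swap_swap)
      ultimately have "i = j" by (rule same_direction_darts[OF n parity ij(1,2) _ ab])
      then show False using ij(3) by contradiction
    next
      case 2
      show False
        by (rule opposite_direction_darts[OF n H_even _ ab, where i = i and j = j])
          (use 2 eq in simp_all)
    next
      case 3
      show False
        by (rule opposite_direction_darts[OF n H_even _ ab(2,1), where i = j and j = i])
          (use 3 eq in simp_all)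
    qed
  qed
qed

end

lemma D_w_succ: "1 \<le> a \<Longrightarrow> D_w k r (Suc a) = D_w k r a - D_step k r (Suc a)"
  by (simp add: D_w_def sum.cl_ivl_Suc)

lemma D_w_odd: "1 \<le> m \<Longrightarrow> m < k \<Longrightarrow> D_w k r (2 * m + 1) = 3 ^ (k - m) - 1"
proof (induction m)
  case 0
  then show ?case by simp
next
  case (Suc m)
  define j where "j = 2 * m + 1"
  have pair: "D_w k r (Suc (Suc j)) = D_w k r j - D_step k r (Suc j) - D_step k r (Suc (Suc j))"
    using D_w_succ[of j k r] D_w_succ[of "Suc j" k r] by (simp add: j_def)
  have "Suc j div 2 = Suc m" "Suc (Suc j) div 2 = Suc m" "Suc j \<le> 3 \<longleftrightarrow> m = 0"
    "Suc (Suc j) \<le> 3 \<longleftrightarrow> m = 0" unfolding j_def by presburger+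
  then have steps: "D_step k r (Suc j) = 3 ^ (k - Suc m) + (if m = 0 then int r else 0)"
      "D_step k r (Suc (Suc j)) = 3 ^ (k - Suc m) + (if m = 0 then int r else 0)"
    by (simp_all add: D_step_def)
  have index: "2 * Suc m + 1 = Suc (Suc j)" by (simp add: j_def)
  have three: "(3::int) ^ (k - m) = 3 * 3 ^ (k - Suc m)"
    using Suc.prems by (simp flip: power_Suc add: Suc_diff_Suc)
  show ?case
  proof (cases "m = 0")
    case True
    then show ?thesis unfolding index using pair steps three by (simp add: D_w_def j_def)
  next
    case False
    then show ?thesis unfolding index using pair steps three Suc by (simp add: j_def)
  qed
qed

lemma D_w_last: "k \<ge> 2 \<Longrightarrow> D_w k r (2 * k - 1) = 2"
  using D_w_odd[of "k - 1" k r] by (simp add: numeral_eq_Suc Suc_diff_Suc)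

lemma D_polygon_length: "k \<ge> 1 \<Longrightarrow> length (D_polygon k r) = 2 * k + 1"
  by (simp add: D_polygon_def)

lemma D_polygon_nth: "k \<ge> 2 \<Longrightarrow> a \<le> 2 * k - 1 \<Longrightarrow> D_polygon k r ! a = D_w k r a"
  using D_w_last[of k r] by (cases "a = 2 * k - 1") (auto simp: D_polygon_def nth_append)

lemma D_polygon_nth_last: "k \<ge> 2 \<Longrightarrow> D_polygon k r ! (2 * k) = 1"
proof -
  assume "k \<ge> 2"
  then have "\<not> 2 * k < 2 * k - 1" "2 * k - (2 * k - 1) = 1" by auto
  then show ?thesis by (simp add: D_polygon_def nth_append)
qed

lemma D_edge_first: "k \<ge> 2 \<Longrightarrow> edge_diff (D_polygon k r) 0 = 3 ^ k - 1 + 2 * int r"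
  using D_polygon_nth[of k 1 r] D_polygon_nth[of k 0 r]
  by (simp add: edge_diff_def D_polygon_length D_w_def)

lemma D_edge_step:
  assumes k: "k \<ge> 2" and a: "1 \<le> a" "a \<le> 2 * k"
  shows "edge_diff (D_polygon k r) a = - D_step k r (a + 1)"
proof -
  consider "a \<le> 2 * k - 2" | "a = 2 * k - 1" | "a = 2 * k" using a by linarith
  then show ?thesis
  proof cases
    case 1
    then show ?thesis
      using k a D_polygon_nth[of k a r] D_polygon_nth[of k "a + 1" r] D_w_succ[of a k r]
      by (simp add: edge_diff_def D_polygon_length)
  next
    case 2
    then show ?thesis
      using k D_polygon_nth[of k a r] D_w_last[of k r] D_polygon_nth_last[of k r]
      by (simp add: edge_diff_def D_polygon_length D_step_def)
  next
    case 3
    then show ?thesis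
      using k D_polygon_nth[of k 0 r] D_polygon_nth_last[of k r]
      by (simp add: edge_diff_def D_polygon_length D_step_def D_w_def)
  qed
qed

lemma D_step_pos: "0 < D_step k r t"
  by (simp add: D_step_def add_pos_nonneg)

lemma D_step_less: "k \<ge> 2 \<Longrightarrow> 2 \<le> t \<Longrightarrow> D_step k r t < 3 ^ k - 1 + 2 * int r"
proof -
  assume k: "k \<ge> 2" and t: "2 \<le> t"
  have "(3::int) ^ (k - t div 2) \<le> 3 ^ (k - 1)" using t by (intro power_increasing) auto
  moreover have "(3::int) ^ k = 3 * 3 ^ (k - 1)" using k by (cases k) auto
  moreover have "(1::int) \<le> 3 ^ (k - 1)" by simp
  moreover have "D_step k r t \<le> 3 ^ (k - t div 2) + int r" by (simp add: D_step_def)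
  ultimately show ?thesis by linarith
qed

(* the steps 3^(k-j) are all distinct, the first pair being the largest *)
lemma D_step_eq_imp_pair:
  assumes k: "k \<ge> 2" and st: "2 \<le> s" "s \<le> 2 * k + 1" "2 \<le> t" "t \<le> 2 * k + 1"
    and eq: "D_step k r s = D_step k r t"
  shows "s div 2 = t div 2"
proof -
  have first_pair_largest: "D_step k r u < D_step k r v" if "4 \<le> u" "v \<le> 3" for u v
  proof -
    have "(3::int) ^ (k - u div 2) \<le> 3 ^ (k - 2)" using that by (intro power_increasing) auto
    also have "\<dots> < 3 ^ (k - v div 2)" using that k by (intro power_strict_increasing) auto
    finally have "(3::int) ^ (k - u div 2) < 3 ^ (k - v div 2)" .
    moreover have "D_step k r u = 3 ^ (k - u div 2)" "D_step k r v = 3 ^ (k - v div 2) + int r"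
      using that by (simp_all add: D_step_def)
    ultimately show ?thesis by linarith
  qed
  show ?thesis
  proof (cases "s \<le> 3 \<and> t \<le> 3")
    case True
    then have "s \<in> {2, 3}" "t \<in> {2, 3}" using st by auto
    then show ?thesis by auto
  next
    case False
    then have "4 \<le> s" "4 \<le> t"
      using first_pair_largest[of s t] first_pair_largest[of t s] eq by linarith+
    then have "(3::int) ^ (k - s div 2) = 3 ^ (k - t div 2)" using eq by (simp add: D_step_def)
    then show ?thesis using st by (simp add: power_inject_exp)
  qed
qed

(* For even r, equal steps only occur on adjacent edges, whose vertices differ by an
   odd step. *)
lemma D_polygon_odd_equal_steps:
  assumes k: "k \<ge> 2" and r: "even r"
  shows "odd_equal_steps (D_polygon k r)"
  unfolding odd_equal_steps_def
proof (intro allI impI)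
  let ?P = "D_polygon k r"
  fix a b
  assume ab: "0 < a" "0 < b" "a < length ?P" "b < length ?P" "a \<noteq> b"
    and eq: "edge_diff ?P a = edge_diff ?P b"
  have len: "length ?P = 2 * k + 1" using k by (simp add: D_polygon_length)
  have "D_step k r (a + 1) = D_step k r (b + 1)"
    using eq D_edge_step[OF k, of a r] D_edge_step[OF k, of b r] ab len by simp
  then have "(a + 1) div 2 = (b + 1) div 2"
    using D_step_eq_imp_pair[OF k] ab len by simp
  then have adjacent: "b = a + 1 \<or> a = b + 1" using ab(5) by presburger
  have down: "?P ! (c + 1) = ?P ! c - D_step k r (c + 1)" if "0 < c" "c + 1 < 2 * k + 1" for c
    using D_edge_step[OF k, of c r] that len by (simp add: edge_diff_def)
  have odd_step: "odd (D_step k r c)" for c using r by (simp add: D_step_def)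
  show "odd (?P ! a - ?P ! b)"
  proof (cases "b = a + 1")
    case True
    then have "?P ! a - ?P ! b = D_step k r (a + 1)" using down[of a] ab len by simp
    then show ?thesis using odd_step by simp
  next
    case False
    then have "a = b + 1" using adjacent by simp
    then have "?P ! a - ?P ! b = - D_step k r (b + 1)" using down[of b] ab len by simp
    then show ?thesis using odd_step by simp
  qed
qed

lemma D_long_first_edge:
  assumes "k \<ge> 2"
  shows "long_first_edge (D_polygon k r) (3 ^ k - 1 + 2 * int r)"
proof
  show "D_polygon k r \<noteq> []" by (simp add: D_polygon_def)
  show "0 < (3::int) ^ k - 1 + 2 * int r"
  proof -
    have "(1::int) < 3 ^ k" using assms by (intro one_less_power) auto
    then show ?thesis by simp
  qed
  show "edge_diff (D_polygon k r) 0 = 3 ^ k - 1 + 2 * int r"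
    using assms by (rule D_edge_first)
  show "- (3 ^ k - 1 + 2 * int r) < edge_diff (D_polygon k r) a \<and> edge_diff (D_polygon k r) a < 0"
    if "0 < a" "a < length (D_polygon k r)" for a
    using D_edge_step[of k a r] D_step_pos[of k r "a + 1"] D_step_less[of k "a + 1" r] that assms
    by (simp add: D_polygon_length)
qed

(* Faces i and i+1 share the directed edge (i+2, i+1): it is the edge w_(2k-1) = 2 -> 1
   of face i and the edge 1 -> 0 of face i+1. *)
lemma D_consecutive_faces_share_dart:
  assumes k: "k \<ge> 2" and i: "i + 1 < n"
  shows "shares_dart (translate_faces (D_polygon k r) n) i (i + 1)"
proof (rule translate_faces_share_dart)
  show "D_polygon k r ! (2 * k - 1) + int i = D_polygon k r ! (2 * k) + int (i + 1)"
    using D_polygon_nth[OF k, of "2 * k - 1" r] D_w_last[OF k, of r] D_polygon_nth_last[OF k, of r]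
    by simp
  show "edge_diff (D_polygon k r) (2 * k - 1) = edge_diff (D_polygon k r) (2 * k)"
    using D_edge_step[OF k, of "2 * k - 1" r] D_edge_step[OF k, of "2 * k" r] k
    by (simp add: D_step_def)
qed (use k i in \<open>auto simp: D_polygon_def D_polygon_length\<close>)

(* Faces 0 and s = 3^(k-1) + r share the directed edge w_1 -> w_2 (= w_2 -> w_3 shifted
   by s), since the first two steps both equal s. *)
lemma D_faces_share_first_pair:
  assumes k: "k \<ge> 2" and s: "int s = D_step k r 2" "s < n"
  shows "shares_dart (translate_faces (D_polygon k r) n) 0 s"
proof (rule translate_faces_share_dart)
  have "D_polygon k r ! 2 = D_polygon k r ! 1 - D_step k r 2"
    using D_polygon_nth[OF k, of 2 r] D_polygon_nth[OF k, of 1 r] D_w_succ[of 1 k r] k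
    by (simp add: numeral_2_eq_2)
  then show "D_polygon k r ! 1 + int 0 = D_polygon k r ! 2 + int s"
    using s by simp
  show "edge_diff (D_polygon k r) 1 = edge_diff (D_polygon k r) 2"
    using D_edge_step[OF k, of 1 r] D_edge_step[OF k, of 2 r] k
    by (simp add: D_step_def)
qed (use k s in \<open>auto simp: D_polygon_def D_polygon_length\<close>)

theorem mainTheorem16:
  fixes k r n :: nat
  assumes "k \<ge> 2" and "n = 2 * 3 ^ k - 2 + 4 * r"
  shows "(even r \<longrightarrow> orientable_map (D_map k r n)) \<and>
         (odd r \<longrightarrow> \<not> orientable_map (D_map k r n))"
proof -
  define H :: int where "H = 3 ^ k - 1 + 2 * int r"
  have "n + 2 = 2 * 3 ^ k + 4 * r"
    using assms(2) one_le_power[of "3::nat" k] by linarith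
  then have "int n + 2 = 2 * 3 ^ k + 4 * int r"
    by (metis of_nat_add of_nat_mult of_nat_numeral of_nat_power)
  then have n: "int n = 2 * H" unfolding H_def by simp
  have P: "long_first_edge (D_polygon k r) H"
    unfolding H_def using assms(1) by (rule D_long_first_edge)
  show ?thesis
    unfolding D_map_translate_faces
  proof (intro conjI impI)
    assume "even r"
    have "even H" by (simp add: H_def)
    then show "orientable_map (translate_faces (D_polygon k r) n)"
      by (rule long_first_edge.translate_faces_orientable[OF P n _
            D_polygon_odd_equal_steps[OF assms(1) \<open>even r\<close>]])
  next
    assume "odd r"
    define s where "s = 3 ^ (k - 1) + r"
    have s_step: "int s = D_step k r 2" by (simp add: s_def D_step_def)
    have "s < n" using s_step n D_step_less[OF assms(1), of 2 r] by (simp add: H_def)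
    moreover have "even s" "0 < s" using \<open>odd r\<close> by (simp_all add: s_def)
    ultimately show "\<not> orientable_map (translate_faces (D_polygon k r) n)"
    proof (intro not_orientable_by_odd_cycle)
      show "shares_dart (translate_faces (D_polygon k r) n) i (i + 1)"
        if "i + 1 < length (translate_faces (D_polygon k r) n)" for i
        using that by (intro D_consecutive_faces_share_dart[OF assms(1)])
          (simp add: translate_faces_length)
    qed (simp_all add: translate_faces_length D_faces_share_first_pair[OF assms(1) s_step])
  qed
qed

end
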